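(* For $n\in\mathbb Z$ let $W_n(k)=\mathrm{diag}(R(nk),R(nk))\in SO(4)$, where $R(\theta)=\begin{pmatrix}\cos\theta&\sin\theta\\-\sin\theta&\cos\theta\end{pmatrix}$. Then $W_n$ is a symmetric loop, null-homotopic in $SO(4)$, its lift with $\tilde W_n(0)=(1,1)$ is $\tilde W_n(k)=(\cos nk+i\sin nk,\ 1)$, so $\tilde W_n(\pi)=((-1)^n,1)$, and $W_n$ is symmetrically homotopic to the constant loop $I_4$ if and only if $n$ is even.
   Context: Identify $\mathbb H$ with $\mathbb R^4$ via $x_0+x_1i+x_2j+x_3k\leftrightarrow(x_0,x_1,x_2,x_3)^T$; $Sp(1)$ is the group of unit quaternions. Let $p:Sp(1)\times Sp(1)\to SO(4)$ send $(g,h)$ to the matrix of $x\mapsto g^{-1}xh$. Let $w=\begin{pmatrix}0&-I_2\\ I_2&0\end{pmatrix}$. A symmetric loop is a continuous $2\pi$-periodic map $W:\mathbb R\to SO(4)$ with $wW(k)w^{-1}=W(-k)^{-1}$ for all $k$. A symmetric homotopy is a continuous $H:\mathbb R\times[0,1]\to SO(4)$ such that $H(\cdot,t)$ is a symmetric loop for every $t$. A lift of $W$ is a continuous $\tilde W:\mathbb R\to Sp(1)\times Sp(1)$ with $p\circ\tilde W=W$. *)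

theory Defs
  imports "HOL-Analysis.Analysis"
begin

text \<open>Quaternions identified with real^4 via x0 + x1 i + x2 j + x3 k <-> (x0,x1,x2,x3);
  component x_m is the entry with index m+1 (entries of vector lists are indexed 1,2,3,4).\<close>

type_synonym quat = "real^4"

definition qmk :: "real \<Rightarrow> real \<Rightarrow> real \<Rightarrow> real \<Rightarrow> quat" where
  "qmk a b c d = vector [a, b, c, d]"

definition qmult :: "quat \<Rightarrow> quat \<Rightarrow> quat" where
  "qmult x y = qmk
     (x$1 * y$1 - x$2 * y$2 - x$3 * y$3 - x$4 * y$4)
     (x$1 * y$2 + x$2 * y$1 + x$3 * y$4 - x$4 * y$3)
     (x$1 * y$3 - x$2 * y$4 + x$3 * y$1 + x$4 * y$2)
     (x$1 * y$4 + x$2 * y$3 - x$3 * y$2 + x$4 * y$1)"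

definition qconj :: "quat \<Rightarrow> quat" where
  "qconj x = qmk (x$1) (- x$2) (- x$3) (- x$4)"

definition qinv :: "quat \<Rightarrow> quat" where
  "qinv x = (1 / (norm x)^2) *\<^sub>R qconj x"

definition Sp1 :: "quat set" where
  "Sp1 = {q. norm q = 1}"

definition SO4 :: "(real^4^4) set" where
  "SO4 = {A. rotation_matrix A}"

definition pmap :: "quat \<times> quat \<Rightarrow> real^4^4" where
  "pmap gh = matrix (\<lambda>x. qmult (qinv (fst gh)) (qmult x (snd gh)))"

definition wmat :: "real^4^4" where
  "wmat = vector [vector [0, 0, -1, 0],
                  vector [0, 0, 0, -1],
                  vector [1, 0, 0, 0],
                  vector [0, 1, 0, 0]]"

definition symmetric_loop :: "(real \<Rightarrow> real^4^4) \<Rightarrow> bool" where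
  "symmetric_loop W \<longleftrightarrow>
     continuous_on UNIV W \<and> (\<forall>k. W k \<in> SO4) \<and> (\<forall>k. W (k + 2 * pi) = W k) \<and>
     (\<forall>k. wmat ** W k ** matrix_inv wmat = matrix_inv (W (- k)))"

definition symmetric_homotopy :: "(real \<times> real \<Rightarrow> real^4^4) \<Rightarrow> bool" where
  "symmetric_homotopy H \<longleftrightarrow>
     continuous_on (UNIV \<times> {0..1}) H \<and> (\<forall>t\<in>{0..1}. symmetric_loop (\<lambda>k. H (k, t)))"

definition is_lift :: "(real \<Rightarrow> quat \<times> quat) \<Rightarrow> (real \<Rightarrow> real^4^4) \<Rightarrow> bool" where
  "is_lift L W \<longleftrightarrow> continuous_on UNIV L \<and> (\<forall>k. L k \<in> Sp1 \<times> Sp1) \<and> (\<forall>k. pmap (L k) = W k)"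

definition loop_homotopic_SO4 :: "(real \<Rightarrow> real^4^4) \<Rightarrow> (real \<Rightarrow> real^4^4) \<Rightarrow> bool" where
  "loop_homotopic_SO4 V W \<longleftrightarrow>
     (\<exists>H :: real \<times> real \<Rightarrow> real^4^4.
        continuous_on (UNIV \<times> {0..1}) H \<and> (\<forall>x \<in> UNIV \<times> {0..1}. H x \<in> SO4) \<and>
        (\<forall>k t. t \<in> {0..1} \<longrightarrow> H (k + 2 * pi, t) = H (k, t)) \<and>
        (\<forall>k. H (k, 0) = V k) \<and> (\<forall>k. H (k, 1) = W k))"

definition Wn :: "int \<Rightarrow> real \<Rightarrow> real^4^4" where
  "Wn n k = (let c = cos (of_int n * k); s = sin (of_int n * k) in
     vector [vector [c, s, 0, 0],
             vector [-s, c, 0, 0],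
             vector [0, 0, c, s],
             vector [0, 0, -s, c]])"

definition Wn_lift :: "int \<Rightarrow> real \<Rightarrow> quat \<times> quat" where
  "Wn_lift n k = (qmk (cos (of_int n * k)) (sin (of_int n * k)) 0 0, qmk 1 0 0 0)"

end

theory Submission
  imports Defs
begin

text \<open>The map p is a two-sheeted covering Sp(1) \<times> Sp(1) \<rightarrow> SO(4) whose only nontrivial deck
  transformation is (g, h) \<mapsto> (-g, -h). Since w = p(1, j), conjugation by w only touches the
  second factor, so the first component g of any lift of a symmetric loop satisfies
  g(k) = \<plusminus>conj(g(-k)). At the symmetric points k = 0 and k = \<pi> the quaternion g(k) is then real
  or purely imaginary, so the product of the real parts of g(0) and g(\<pi>) lies in {-1, 0, 1}, and
  it does not depend on the sign of the lift. Lifting a symmetric homotopy, this product varies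
  continuously and is therefore constant: it is (-1)^n for W_n and 1 for the constant loop.

  Conversely, with c = cos(\<pi>t/2), s = sin(\<pi>t/2) and z = cos(mk) + i sin(mk), the loops
  p((cz + sj)(cz - sj), 1) deform W_(2m) symmetrically into the identity; the path
  p((cz + sj)(c - sj), 1) with z = cos(nk) + i sin(nk) is a (non-symmetric) null-homotopy of W_n.\<close>

section \<open>Quaternion algebra\<close>

abbreviation "q1 \<equiv> qmk 1 0 0 0"
abbreviation "qi \<equiv> qmk 0 1 0 0"
abbreviation "qj \<equiv> qmk 0 0 1 0"
abbreviation "qk \<equiv> qmk 0 0 0 1"

lemma vector_4_nth [simp]:
  "(vector [a, b, c, d] :: ('a::zero)^4) $ 1 = a" "(vector [a, b, c, d] :: ('a::zero)^4) $ 2 = b"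
  "(vector [a, b, c, d] :: ('a::zero)^4) $ 3 = c" "(vector [a, b, c, d] :: ('a::zero)^4) $ 4 = d"
  by (simp_all add: vector_def)

lemma qmk_nth [simp]:
  "qmk a b c d $ 1 = a" "qmk a b c d $ 2 = b" "qmk a b c d $ 3 = c" "qmk a b c d $ 4 = d"
  by (simp_all add: qmk_def)

lemma quat_eq_iff: "(x::quat) = y \<longleftrightarrow> x$1 = y$1 \<and> x$2 = y$2 \<and> x$3 = y$3 \<and> x$4 = y$4"
  by (simp add: vec_eq_iff forall_4)

lemma norm_quat_power2: "(norm (x::quat))^2 = x$1^2 + x$2^2 + x$3^2 + x$4^2"
  by (simp add: norm_vec_def L2_set_def sum_4 real_norm_def)

lemma norm_quat: "norm (x::quat) = sqrt (x$1^2 + x$2^2 + x$3^2 + x$4^2)"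
  by (simp add: norm_quat_power2[symmetric])

lemma norm_qmk [simp]: "norm (qmk a b c d) = sqrt (a^2 + b^2 + c^2 + d^2)"
  by (simp add: norm_quat)

lemma inner_quat: "(x::quat) \<bullet> y = x$1*y$1 + x$2*y$2 + x$3*y$3 + x$4*y$4"
  by (simp add: inner_vec_def sum_4)

lemma qmult_nth [simp]:
  "qmult x y $ 1 = x$1 * y$1 - x$2 * y$2 - x$3 * y$3 - x$4 * y$4"
  "qmult x y $ 2 = x$1 * y$2 + x$2 * y$1 + x$3 * y$4 - x$4 * y$3"
  "qmult x y $ 3 = x$1 * y$3 - x$2 * y$4 + x$3 * y$1 + x$4 * y$2"
  "qmult x y $ 4 = x$1 * y$4 + x$2 * y$3 - x$3 * y$2 + x$4 * y$1"
  by (simp_all add: qmult_def)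

lemma qconj_nth [simp]:
  "qconj x $ 1 = x$1" "qconj x $ 2 = - x$2" "qconj x $ 3 = - x$3" "qconj x $ 4 = - x$4"
  by (simp_all add: qconj_def)

lemma qmult_assoc: "qmult (qmult x y) z = qmult x (qmult y z)"
  by (simp add: quat_eq_iff algebra_simps)

lemma qmult_one [simp]: "qmult q1 x = x" "qmult x q1 = x"
  by (simp_all add: quat_eq_iff)

lemma qmult_add: "qmult (x + y) z = qmult x z + qmult y z" "qmult z (x + y) = qmult z x + qmult z y"
  by (simp_all add: quat_eq_iff algebra_simps)

lemma qmult_scaleR [simp]:
  "qmult (c *\<^sub>R x) y = c *\<^sub>R qmult x y" "qmult x (c *\<^sub>R y) = c *\<^sub>R qmult x y"
  by (simp_all add: quat_eq_iff algebra_simps)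

lemma qmult_minus [simp]: "qmult (- x) y = - qmult x y" "qmult x (- y) = - qmult x y"
  by (simp_all add: quat_eq_iff algebra_simps)

lemma qconj_qmult: "qconj (qmult x y) = qmult (qconj y) (qconj x)"
  by (simp add: quat_eq_iff algebra_simps)

lemma qconj_qconj [simp]: "qconj (qconj x) = x"
  by (simp add: quat_eq_iff)

lemma qconj_minus [simp]: "qconj (- x) = - qconj x"
  by (simp add: quat_eq_iff)

lemma qconj_scaleR [simp]: "qconj (c *\<^sub>R x) = c *\<^sub>R qconj x"
  by (simp add: quat_eq_iff)

lemma qconj_one [simp]: "qconj q1 = q1"
  by (simp add: quat_eq_iff)

lemma qmult_qconj_right: "qmult x (qconj x) = (norm x)^2 *\<^sub>R q1"
  using norm_quat_power2[of x] by (simp add: quat_eq_iff algebra_simps power2_eq_square)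

lemma qmult_qconj_left: "qmult (qconj x) x = (norm x)^2 *\<^sub>R q1"
  using norm_quat_power2[of x] by (simp add: quat_eq_iff algebra_simps power2_eq_square)

lemma norm_qmult: "norm (qmult x y) = norm x * norm y"
proof -
  have "(norm (qmult x y))^2 = (norm x * norm y)^2"
    unfolding power_mult_distrib norm_quat_power2 by (simp add: algebra_simps power2_eq_square)
  then show ?thesis by (simp add: power2_eq_iff_nonneg)
qed

lemma norm_qconj [simp]: "norm (qconj x) = norm x"
  by (simp add: norm_eq_sqrt_inner inner_quat)

lemma inner_qmult_left: "qmult c a \<bullet> qmult c b = (norm c)^2 * (a \<bullet> b)"
  unfolding inner_quat norm_quat_power2 by (simp add: algebra_simps power2_eq_square)

lemma inner_qmult_right: "qmult a c \<bullet> qmult b c = (norm c)^2 * (a \<bullet> b)"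
  unfolding inner_quat norm_quat_power2 by (simp add: algebra_simps power2_eq_square)

lemma qinv_unit: "norm x = 1 \<Longrightarrow> qinv x = qconj x"
  by (simp add: qinv_def)

lemma unit_qmult_qconj [simp]:
  "norm a = 1 \<Longrightarrow> qmult (qconj a) a = q1"
  "norm a = 1 \<Longrightarrow> qmult a (qconj a) = q1"
  by (simp_all add: qmult_qconj_left qmult_qconj_right)

lemma unit_qmult_cancel [simp]:
  "norm a = 1 \<Longrightarrow> qmult a (qmult (qconj a) x) = x"
  "norm a = 1 \<Longrightarrow> qmult (qconj a) (qmult a x) = x"
  "norm a = 1 \<Longrightarrow> qmult (qmult x a) (qconj a) = x"
  "norm a = 1 \<Longrightarrow> qmult (qmult x (qconj a)) a = x"
  by (simp_all add: qmult_assoc[symmetric]) (simp_all add: qmult_assoc)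

lemma continuous_on_qmk [continuous_intros]:
  assumes "continuous_on S a" "continuous_on S b" "continuous_on S c" "continuous_on S d"
  shows "continuous_on S (\<lambda>x. qmk (a x) (b x) (c x) (d x))"
proof -
  have "continuous_on S (\<lambda>x. \<chi> i. qmk (a x) (b x) (c x) (d x) $ i)"
  proof (rule continuous_on_vec_lambda)
    fix i :: 4
    show "continuous_on S (\<lambda>x. qmk (a x) (b x) (c x) (d x) $ i)"
      using exhaust_4[of i] by (auto simp: assms)
  qed
  then show ?thesis by simp
qed

lemma continuous_on_qmult [continuous_intros]:
  "continuous_on S f \<Longrightarrow> continuous_on S g \<Longrightarrow> continuous_on S (\<lambda>x. qmult (f x) (g x))"
  unfolding qmult_def by (intro continuous_intros)

lemma continuous_on_qconj [continuous_intros]: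
  "continuous_on S f \<Longrightarrow> continuous_on S (\<lambda>x. qconj (f x))"
  unfolding qconj_def by (intro continuous_intros)

lemma Sp1_eq_sphere: "Sp1 = sphere 0 1"
  by (auto simp: Sp1_def)

lemma mem_Sp1_Times_iff: "c \<in> Sp1 \<times> Sp1 \<longleftrightarrow> norm (fst c) = 1 \<and> norm (snd c) = 1"
  by (cases c) (simp add: Sp1_def)

lemma uminus_mem_Sp1_Times: "c \<in> Sp1 \<times> Sp1 \<Longrightarrow> - c \<in> Sp1 \<times> Sp1"
  by (simp add: mem_Sp1_Times_iff)

section \<open>The map p\<close>

definition qact :: "quat \<Rightarrow> quat \<Rightarrow> quat \<Rightarrow> quat" where
  "qact g h x = qmult (qconj g) (qmult x h)"

lemma linear_qact: "linear (qact g h)"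
  by (rule linearI) (simp_all add: qact_def qmult_add)

lemma pmap_eq_matrix_qact: "norm g = 1 \<Longrightarrow> pmap (g, h) = matrix (qact g h)"
  by (simp add: pmap_def qact_def[abs_def] qinv_unit del: qmult_nth)

lemma pmap_mult_vec: "norm g = 1 \<Longrightarrow> pmap (g, h) *v x = qact g h x"
  by (simp add: pmap_eq_matrix_qact matrix_vector_mul(2)[OF linear_qact])

lemma pmap_eq_iff:
  "norm g = 1 \<Longrightarrow> norm g' = 1 \<Longrightarrow> pmap (g, h) = pmap (g', h') \<longleftrightarrow> (\<forall>x. qact g h x = qact g' h' x)"
  by (simp add: matrix_eq pmap_mult_vec)

lemma pmap_mult:
  "norm a = 1 \<Longrightarrow> norm c = 1 \<Longrightarrow> pmap (a, b) ** pmap (c, d) = pmap (qmult c a, qmult d b)"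
  by (simp add: matrix_eq pmap_mult_vec norm_qmult matrix_vector_mul_assoc[symmetric] qact_def
      qconj_qmult qmult_assoc)

lemma pmap_one: "pmap (q1, q1) = mat 1"
  by (simp add: matrix_eq pmap_mult_vec qact_def)

lemma pmap_uminus: "pmap (- c) = pmap c"
  by (cases c) (simp add: pmap_def qinv_def del: qmult_nth qconj_nth)

lemma continuous_on_pmap: "continuous_on (Sp1 \<times> Sp1) pmap"
proof -
  have "continuous_on (Sp1 \<times> Sp1) (\<lambda>c. matrix (qact (fst c) (snd c)))"
    unfolding matrix_def qact_def by (intro continuous_intros)
  then show ?thesis
    by (rule continuous_on_eq) (auto simp: mem_Sp1_Times_iff pmap_eq_matrix_qact)
qed

lemma continuous_on_pmap_compose:
  assumes "continuous_on S f" "\<And>x. x \<in> S \<Longrightarrow> f x \<in> Sp1 \<times> Sp1"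
  shows "continuous_on S (\<lambda>x. pmap (f x))"
  using continuous_on_compose2[OF continuous_on_pmap assms(1)] assms(2) by blast

lemma continuous_on_det [continuous_intros]:
  fixes F :: "'a::topological_space \<Rightarrow> real^'n^'n"
  shows "continuous_on S F \<Longrightarrow> continuous_on S (\<lambda>x. det (F x))"
  unfolding det_def by (intro continuous_intros)

lemma orthogonal_transformation_qact:
  "norm g = 1 \<Longrightarrow> norm h = 1 \<Longrightarrow> orthogonal_transformation (qact g h)"
  by (simp add: orthogonal_transformation linear_qact qact_def norm_qmult)

lemma orthogonal_matrix_pmap: "c \<in> Sp1 \<times> Sp1 \<Longrightarrow> orthogonal_matrix (pmap c)"
  using orthogonal_transformation_qact[of "fst c" "snd c"]
  by (cases c) (simp add: mem_Sp1_Times_iff pmap_eq_matrix_qact orthogonal_transformation_matrix)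

lemma det_pmap: assumes "c \<in> Sp1 \<times> Sp1" shows "det (pmap c) = 1"
proof -
  have "(\<lambda>c. det (pmap c)) constant_on Sp1 \<times> Sp1"
  proof (rule continuous_finite_range_constant)
    show "connected (Sp1 \<times> Sp1)" by (simp add: Sp1_eq_sphere connected_Times connected_sphere)
    show "continuous_on (Sp1 \<times> Sp1) (\<lambda>c. det (pmap c))"
      by (intro continuous_intros continuous_on_pmap)
    have "det (pmap c) \<in> {-1, 1}" if "c \<in> Sp1 \<times> Sp1" for c
      using det_orthogonal_matrix[OF orthogonal_matrix_pmap[OF that]] by auto
    then show "finite ((\<lambda>c. det (pmap c)) ` (Sp1 \<times> Sp1))"
      by (meson finite.emptyI finite_insert finite_subset image_subsetI)
  qed
  moreover have "(q1, q1) \<in> Sp1 \<times> Sp1" by (simp add: mem_Sp1_Times_iff)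
  ultimately have "det (pmap c) = det (pmap (q1, q1))" using assms by (auto simp: constant_on_def)
  then show ?thesis by (simp add: pmap_one)
qed

lemma pmap_in_SO4: "c \<in> Sp1 \<times> Sp1 \<Longrightarrow> pmap c \<in> SO4"
  by (simp add: SO4_def rotation_matrix_def orthogonal_matrix_pmap det_pmap)

lemma matrix_inv_unique:
  fixes A B :: "'a::semiring_1^'n^'n"
  assumes "A ** B = mat 1" "B ** A = mat 1"
  shows "matrix_inv A = B"
proof -
  let ?C = "matrix_inv A"
  have "A ** ?C = mat 1 \<and> ?C ** A = mat 1"
    unfolding matrix_inv_def by (rule someI[of _ B]) (use assms in auto)
  then have "?C = ?C ** (A ** B)" "?C ** A = mat 1" using assms by auto
  then show ?thesis by (simp add: matrix_mul_assoc)
qed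

lemma matrix_inv_pmap:
  "norm g = 1 \<Longrightarrow> norm h = 1 \<Longrightarrow> matrix_inv (pmap (g, h)) = pmap (qconj g, qconj h)"
  by (intro matrix_inv_unique) (simp_all add: pmap_mult pmap_one)

lemma wmat_eq_pmap: "wmat = pmap (q1, qj)"
  by (simp add: pmap_eq_matrix_qact wmat_def vec_eq_iff forall_4 matrix_def qact_def axis_def)

lemma two_sided_identity_cases:
  assumes u: "norm u = 1" and id: "\<And>x. qmult u (qmult x v) = x"
  shows "u = q1 \<or> u = - q1" "v = qconj u"
proof -
  have "qmult u v = q1" using id[of q1] by simp
  then have "qmult (qconj u) (qmult u v) = qconj u" by simp
  then show v: "v = qconj u" using u by simp
  have central: "qmult u x = qmult x u" for x
  proof -
    have "qmult (qmult u (qmult x (qconj u))) u = qmult x u" using id[of x] v by simp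
    then show ?thesis using u by (simp add: qmult_assoc)
  qed
  have "u$2 = 0" "u$3 = 0" "u$4 = 0"
    using central[of qi] central[of qj] by (simp_all add: quat_eq_iff)
  moreover from this have "(u$1)^2 = 1" using u norm_quat_power2[of u] by simp
  ultimately show "u = q1 \<or> u = - q1" by (auto simp: quat_eq_iff power2_eq_1_iff)
qed

lemma qact_eq_cases:
  assumes n: "norm g = 1" "norm h = 1" "norm g' = 1" "norm h' = 1"
    and eq: "\<And>x. qact g h x = qact g' h' x"
  shows "(g' = g \<and> h' = h) \<or> (g' = - g \<and> h' = - h)"
proof -
  define u where "u = qmult g' (qconj g)"
  define v where "v = qmult h (qconj h')"
  have "norm u = 1" using n by (simp add: u_def norm_qmult)
  moreover have "qmult u (qmult x v) = x" for x
  proof -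
    have "qmult g' (qmult (qact g h x) (qconj h')) = qmult g' (qmult (qact g' h' x) (qconj h'))"
      using eq[of x] by simp
    then show ?thesis using n by (simp add: qact_def u_def v_def qmult_assoc)
  qed
  ultimately have u: "u = q1 \<or> u = - q1" and v: "v = qconj u"
    using two_sided_identity_cases by blast+
  have "g' = qmult u g" using n by (simp add: u_def qmult_assoc)
  moreover have "h' = qmult u h"
  proof -
    have "qmult (qconj h) v = qconj h'" using n by (simp add: v_def)
    then have "qconj (qmult (qconj h) v) = h'" by simp
    then show ?thesis using v by (simp add: qconj_qmult)
  qed
  ultimately show ?thesis using u by auto
qed

lemma pmap_eq_cases:
  assumes "c \<in> Sp1 \<times> Sp1" "d \<in> Sp1 \<times> Sp1" "pmap d = pmap c"
  shows "d = c \<or> d = - c"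
  using assms qact_eq_cases[of "fst c" "snd c" "fst d" "snd d"]
  by (cases c, cases d) (auto simp: mem_Sp1_Times_iff pmap_eq_iff)

lemma unit_conj_qi_exists:
  assumes b1: "b$1 = 0" and nb: "norm b = 1"
  obtains u where "norm u = 1" "qmult (qmult u qi) (qconj u) = b"
proof (cases "b$2 = -1")
  case True
  moreover have "(b$2)^2 + (b$3)^2 + (b$4)^2 = 1" using nb norm_quat_power2[of b] b1 by simp
  ultimately have "qmult (qmult qj qi) (qconj qj) = b" using b1 by (simp add: quat_eq_iff)
  then show ?thesis using that[of qj] by simp
next
  case False
  have sq: "(b$2)^2 + (b$3)^2 + (b$4)^2 = 1" using nb norm_quat_power2[of b] b1 by simp
  then have "(b$2)^2 \<le> 1" using zero_le_power2[of "b$3"] zero_le_power2[of "b$4"] by linarith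
  then have "\<bar>b$2\<bar> \<le> 1" by (simp add: abs_square_le_1)
  then have pos: "1 + b$2 > 0" using False by linarith
  \<comment> \<open>u0 = 1 - b i bisects the rotation taking i to b\<close>
  define u0 where "u0 = qmk (1 + b$2) 0 (- b$4) (b$3)"
  define r where "r = sqrt (2 * (1 + b$2))"
  have r2: "r^2 = 2 * (1 + b$2)" and "r > 0" using pos by (simp_all add: r_def)
  have "(norm u0)^2 = r^2"
    unfolding r2 norm_quat_power2 u0_def using sq by (simp add: algebra_simps power2_eq_square)
  then have nu: "norm ((1/r) *\<^sub>R u0) = 1" using \<open>r > 0\<close> by (simp add: power2_eq_iff_nonneg)
  have key: "qmult (qmult u0 qi) (qconj u0) = r^2 *\<^sub>R b"
  proof -
    have e: "(b$2)^2 = 1 - (b$3)^2 - (b$4)^2" using sq by simp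
    show ?thesis unfolding r2 u0_def quat_eq_iff using b1
      by (simp add: algebra_simps power2_eq_square e[unfolded power2_eq_square])
  qed
  have "qmult (qmult ((1/r) *\<^sub>R u0) qi) (qconj ((1/r) *\<^sub>R u0))
      = (1/r^2) *\<^sub>R qmult (qmult u0 qi) (qconj u0)"
    by (simp add: power2_eq_square del: qmult_nth qconj_nth)
  also have "\<dots> = b" using key \<open>r > 0\<close> by simp
  finally show ?thesis by (rule that[OF nu])
qed

lemma unit_orthogonal_R2_cases:
  fixes c3 c4 d3 d4 :: real
  assumes c: "c3^2 + c4^2 = 1" and d: "d3^2 + d4^2 = 1" and cd: "c3 * d3 + c4 * d4 = 0"
  shows "(d3 = - c4 \<and> d4 = c3) \<or> (d3 = c4 \<and> d4 = - c3)"
proof -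
  define l where "l = d4 * c3 - d3 * c4"
  have d3: "d3 = - c4 * l"
  proof -
    have "d3 = d3 * (c3^2 + c4^2)" using c by simp
    also have "\<dots> = c3 * (c3 * d3 + c4 * d4) - c4 * l" by (simp add: l_def algebra_simps power2_eq_square)
    finally show ?thesis using cd by simp
  qed
  have d4: "d4 = c3 * l"
  proof -
    have "d4 = d4 * (c3^2 + c4^2)" using c by simp
    also have "\<dots> = c4 * (c3 * d3 + c4 * d4) + c3 * l" by (simp add: l_def algebra_simps power2_eq_square)
    finally show ?thesis using cd by simp
  qed
  have "1 = l^2 * (c3^2 + c4^2)" using d by (simp add: d3 d4 algebra_simps power2_eq_square)
  then have "l = 1 \<or> l = -1" using c by (simp add: power2_eq_1_iff)
  then show ?thesis using d3 d4 by auto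
qed

definition qrot :: "real \<Rightarrow> quat" where
  "qrot t = qmk (cos (t/2)) (sin (t/2)) 0 0"

lemma norm_qrot [simp]: "norm (qrot t) = 1"
  by (simp add: qrot_def)

lemma qrot_conj_basis:
  "qmult (qmult (qrot t) q1) (qconj (qrot t)) = q1"
  "qmult (qmult (qrot t) qi) (qconj (qrot t)) = qi"
  "qmult (qmult (qrot t) qj) (qconj (qrot t)) = qmk 0 0 (cos t) (sin t)"
  "qmult (qmult (qrot t) qk) (qconj (qrot t)) = qmk 0 0 (- sin t) (cos t)"
proof -
  have c: "cos t = cos (t/2) * cos (t/2) - sin (t/2) * sin (t/2)"
    using cos_add[of "t/2" "t/2"] by simp
  have s: "sin t = 2 * (sin (t/2) * cos (t/2))"
    using sin_add[of "t/2" "t/2"] by simp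
  have p: "cos (t/2) * cos (t/2) + sin (t/2) * sin (t/2) = 1"
    using sin_cos_squared_add3[of "t/2"] by (simp add: algebra_simps)
  show "qmult (qmult (qrot t) q1) (qconj (qrot t)) = q1"
    by simp
  show "qmult (qmult (qrot t) qi) (qconj (qrot t)) = qi"
    using p by (simp add: qrot_def quat_eq_iff algebra_simps)
  show "qmult (qmult (qrot t) qj) (qconj (qrot t)) = qmk 0 0 (cos t) (sin t)"
    using p by (simp add: qrot_def quat_eq_iff c s algebra_simps)
  show "qmult (qmult (qrot t) qk) (qconj (qrot t)) = qmk 0 0 (- sin t) (cos t)"
    using p by (simp add: qrot_def quat_eq_iff c s algebra_simps)
qed

lemma Basis_quat_cases:
  assumes "(e::quat) \<in> Basis"
  obtains "e = q1" | "e = qi" | "e = qj" | "e = qk"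
proof -
  obtain i where e: "e = axis i 1" using assms by (auto simp: Basis_vec_def)
  show ?thesis using exhaust_4[of i] that unfolding e by (auto simp: quat_eq_iff axis_def)
qed

definition kflip :: "real^4^4" where
  "kflip = (\<chi> i j. if i = j then (if i = 4 then -1 else 1) else 0)"

lemma kflip_mult_vec [simp]: "kflip *v x = qmk (x$1) (x$2) (x$3) (- x$4)"
  by (simp add: kflip_def quat_eq_iff matrix_vector_mult_def sum_4)

lemma det_kflip: "det kflip = -1"
proof -
  have "det kflip = (\<Prod>i\<in>UNIV. kflip$i$i)" by (rule det_diagonal) (simp add: kflip_def)
  also have "\<dots> = -1" unfolding UNIV_4 by (simp add: kflip_def)
  finally show ?thesis .
qed

lemma isometry_fixing_1_i_cases:
  assumes lin: "linear f" and inner: "\<And>x y. f x \<bullet> f y = x \<bullet> y"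
    and f1: "f q1 = q1" and fi: "f qi = qi"
  obtains w M where "norm w = 1" "M = mat 1 \<or> M = kflip"
    "\<And>x. f x = qmult (qmult w (M *v x)) (qconj w)"
proof -
  define c where "c = f qj"
  define d where "d = f qk"
  have c12: "c$1 = 0" "c$2 = 0" and d12: "d$1 = 0" "d$2 = 0"
    using inner[of qj q1] inner[of qj qi] inner[of qk q1] inner[of qk qi] f1 fi
    by (simp_all add: c_def d_def inner_quat)
  have c34: "(c$3)^2 + (c$4)^2 = 1" and d34: "(d$3)^2 + (d$4)^2 = 1"
    and cd: "c$3 * d$3 + c$4 * d$4 = 0"
    using inner[of qj qj] inner[of qk qk] inner[of qj qk] c12 d12
    by (simp_all add: c_def[symmetric] d_def[symmetric] inner_quat power2_eq_square)
  obtain t where t: "c$3 = cos t" "c$4 = sin t" using sincos_total_2pi_le[OF c34] by blast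
  have fj: "f qj = qmk 0 0 (cos t) (sin t)" using c12 t by (simp add: c_def[symmetric] quat_eq_iff)
  let ?conj = "\<lambda>x. qmult (qmult (qrot t) x) (qconj (qrot t))"
  obtain M where M: "M = mat 1 \<or> M = kflip" and fk: "f qk = ?conj (M *v qk)"
  proof -
    consider "d$3 = - sin t \<and> d$4 = cos t" | "d$3 = sin t \<and> d$4 = - cos t"
      using unit_orthogonal_R2_cases[OF c34 d34 cd] t by auto
    then show ?thesis
    proof cases
      case 1
      then have "f qk = ?conj (mat 1 *v qk)"
        using d12 by (simp add: d_def[symmetric] qrot_conj_basis quat_eq_iff)
      then show ?thesis using that by blast
    next
      case 2
      have "kflip *v qk = - qk" by (simp add: quat_eq_iff)
      then have "?conj (kflip *v qk) = - ?conj qk" by (simp del: kflip_mult_vec)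
      also have "\<dots> = qmk 0 0 (sin t) (- cos t)" by (simp add: qrot_conj_basis quat_eq_iff)
      finally have "?conj (kflip *v qk) = qmk 0 0 (sin t) (- cos t)" .
      moreover have "f qk = qmk 0 0 (sin t) (- cos t)"
        using d12 2 by (simp add: d_def[symmetric] quat_eq_iff)
      ultimately have "f qk = ?conj (kflip *v qk)" by (simp only:)
      then show ?thesis using that by blast
    qed
  qed
  have fixed: "M *v e = e" if "e = q1 \<or> e = qi \<or> e = qj" for e
    using M that by (auto simp: quat_eq_iff)
  have "f = (\<lambda>x. ?conj (M *v x))"
  proof (rule linear_eq_stdbasis[OF lin])
    show "linear (\<lambda>x. ?conj (M *v x))"
      by (rule linearI) (simp_all add: qmult_add matrix_vector_right_distrib matrix_vector_mult_scaleR)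
    fix e :: quat assume "e \<in> Basis"
    then show "f e = ?conj (M *v e)"
      by (cases rule: Basis_quat_cases) (simp_all add: fixed qrot_conj_basis f1 fi fj fk)
  qed
  then show ?thesis using that[OF norm_qrot M] by simp
qed

lemma orthogonal_matrix_eq_pmap_mult:
  assumes "orthogonal_matrix A"
  obtains g h M where "norm g = 1" "norm h = 1" "M = mat 1 \<or> M = kflip" "A = pmap (g, h) ** M"
proof -
  have "orthogonal_transformation (\<lambda>x. A *v x)"
    using assms by (simp add: orthogonal_transformation_matrix)
  then have inner: "(A *v x) \<bullet> (A *v y) = x \<bullet> y" for x y
    by (simp add: orthogonal_transformation_def)
  define q where "q = A *v q1"
  have nq: "norm q = 1" using inner[of q1 q1] by (simp add: q_def norm_eq_1 inner_quat)
  define b where "b = qmult (qconj q) (A *v qi)"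
  have "b$1 = 0" using inner[of qi q1] nq by (simp add: b_def q_def inner_quat algebra_simps)
  moreover have "norm (A *v qi) = 1" using inner[of qi qi] by (simp add: norm_eq_1 inner_quat)
  then have "norm b = 1" using nq by (simp add: b_def norm_qmult)
  ultimately obtain u where nu: "norm u = 1" and ub: "qmult (qmult u qi) (qconj u) = b"
    using unit_conj_qi_exists by blast
  \<comment> \<open>normalise A to an isometry fixing 1 and i\<close>
  define f where "f x = qmult (qconj u) (qmult (qmult (qconj q) (A *v x)) u)" for x
  have "linear f"
    by (rule linearI) (simp_all add: f_def qmult_add matrix_vector_right_distrib matrix_vector_mult_scaleR)
  moreover have "f x \<bullet> f y = x \<bullet> y" for x y
    using nq nu by (simp add: f_def inner_qmult_left inner_qmult_right inner)
  moreover have "f q1 = q1" using nq nu by (simp add: f_def q_def[symmetric])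
  moreover have "f qi = qi" using nu by (simp add: f_def b_def[symmetric] ub[symmetric] qmult_assoc)
  ultimately obtain w M where nw: "norm w = 1" and M: "M = mat 1 \<or> M = kflip"
    and fw: "\<And>x. f x = qmult (qmult w (M *v x)) (qconj w)"
    by (rule isometry_fixing_1_i_cases) blast
  let ?g = "qconj (qmult q (qmult u w))" and ?h = "qconj (qmult u w)"
  have ng: "norm ?g = 1" and nh: "norm ?h = 1" using nq nu nw by (simp_all add: norm_qmult)
  have "A *v x = qmult (qmult q u) (qmult (f x) (qconj u))" for x
    using nq nu by (simp add: f_def qconj_qmult qmult_assoc)
  then have "A *v x = (pmap (?g, ?h) ** M) *v x" for x
    using ng by (simp add: fw pmap_mult_vec qact_def qconj_qmult qmult_assoc
        flip: matrix_vector_mul_assoc)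
  then have "A = pmap (?g, ?h) ** M" by (simp add: matrix_eq)
  with ng nh M show ?thesis by (rule that)
qed

lemma pmap_image_Sp1: "pmap ` (Sp1 \<times> Sp1) = SO4"
proof
  show "pmap ` (Sp1 \<times> Sp1) \<subseteq> SO4" using pmap_in_SO4 by blast
  show "SO4 \<subseteq> pmap ` (Sp1 \<times> Sp1)"
  proof
    fix A assume "A \<in> SO4"
    then have A: "orthogonal_matrix A" "det A = 1" by (simp_all add: SO4_def rotation_matrix_def)
    obtain g h M where "norm g = 1" "norm h = 1" and M: "M = mat 1 \<or> M = kflip"
      and AM: "A = pmap (g, h) ** M"
      using A(1) by (rule orthogonal_matrix_eq_pmap_mult)
    then have gh: "(g, h) \<in> Sp1 \<times> Sp1" by (simp add: mem_Sp1_Times_iff)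
    have "M \<noteq> kflip" using A(2) det_pmap[OF gh] by (auto simp: AM det_mul det_kflip)
    then have "A = pmap (g, h)" using M AM by simp
    with gh show "A \<in> pmap ` (Sp1 \<times> Sp1)" by blast
  qed
qed

section \<open>Antipodal double covers\<close>

definition identifies_antipodes :: "'a::real_normed_vector set \<Rightarrow> ('a \<Rightarrow> 'b) \<Rightarrow> bool" where
  "identifies_antipodes C p \<longleftrightarrow>
     (\<forall>c\<in>C. - c \<in> C \<and> p (- c) = p c) \<and> (\<forall>c\<in>C. \<forall>d\<in>C. p d = p c \<longrightarrow> d = c \<or> d = - c)"

lemma identifies_antipodesD:
  assumes "identifies_antipodes C p" "c \<in> C"
  shows "- c \<in> C" "p (- c) = p c" "d \<in> C \<Longrightarrow> p d = p c \<Longrightarrow> d = c \<or> d = - c"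
  using assms unfolding identifies_antipodes_def by blast+

lemma antipode_notin_ball_half_norm:
  fixes c x :: "'a::real_normed_vector"
  assumes "x \<in> ball c (norm c / 2)"
  shows "- x \<notin> ball c (norm c / 2)"
proof
  assume "- x \<in> ball c (norm c / 2)"
  with assms have "norm (c - x) + norm (c + x) < norm c" by (simp add: dist_norm)
  moreover have "norm (2 *\<^sub>R c) \<le> norm (c - x) + norm (c + x)"
    using norm_triangle_ineq[of "c - x" "c + x"] by (simp add: scaleR_2)
  ultimately show False using norm_ge_zero[of c] by simp
qed

lemma open_map_identifies_antipodes:
  fixes p :: "'a::real_normed_vector \<Rightarrow> 'b::t2_space"
  assumes C: "compact C" and p: "continuous_on C p" and anti: "identifies_antipodes C p"
    and U: "openin (top_of_set C) U"
  shows "openin (top_of_set (p ` C)) (p ` U)"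
proof -
  have UC: "U \<subseteq> C" using openin_subset[OF U] by simp
  note neg = identifies_antipodesD(1,2)[OF anti]
  define K where "K = C - (U \<union> (C \<inter> uminus -` U))"
  have "openin (top_of_set C) (C \<inter> uminus -` U)"
    by (rule continuous_openin_preimage[OF _ _ U]) (auto intro: continuous_intros neg)
  then have "closedin (top_of_set C) K" unfolding K_def using U by (intro closedin_diff) auto
  then have "compact K" using closedin_compact[OF C] by blast
  moreover have "K \<subseteq> C" by (auto simp: K_def)
  ultimately have "closed (p ` K)"
    by (intro compact_imp_closed compact_continuous_image continuous_on_subset[OF p])
  moreover have "p ` U = p ` C - p ` K"
  proof
    show "p ` U \<subseteq> p ` C - p ` K"
    proof
      fix y assume "y \<in> p ` U"
      then obtain x where x: "x \<in> U" "y = p x" by blast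
      have "y \<notin> p ` K"
      proof
        assume "y \<in> p ` K"
        then obtain k where k: "k \<in> K" "p k = p x" using x by auto
        then have "k = x \<or> k = - x"
          using identifies_antipodesD(3)[OF anti, of x k] UC x by (auto simp: K_def)
        then show False using x k by (auto simp: K_def)
      qed
      then show "y \<in> p ` C - p ` K" using x UC by auto
    qed
    show "p ` C - p ` K \<subseteq> p ` U"
    proof clarify
      fix c assume "c \<in> C" "p c \<notin> p ` K"
      then have "c \<in> U \<or> - c \<in> U" by (auto simp: K_def)
      then show "p c \<in> p ` U" using neg[OF \<open>c \<in> C\<close>] by (metis image_eqI)
    qed
  qed
  moreover have "p ` C - p ` K = p ` C - (p ` C \<inter> p ` K)" by auto
  ultimately show ?thesis
    using openin_diff[OF openin_subtopology_self closedin_closed_Int[of "p ` K" "p ` C"]] by simp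
qed

lemma homeomorphism_identifies_antipodes:
  fixes p :: "'a::real_normed_vector \<Rightarrow> 'b::t2_space"
  assumes C: "compact C" and p: "continuous_on C p" and anti: "identifies_antipodes C p"
    and W: "openin (top_of_set C) W" and free: "\<And>x. x \<in> W \<Longrightarrow> - x \<notin> W"
  obtains q where "homeomorphism W (p ` W) p q"
proof (rule homeomorphism_injective_open_map[OF _ refl])
  have WC: "W \<subseteq> C" using openin_subset[OF W] by simp
  then show "continuous_on W p" using p continuous_on_subset by blast
  show "inj_on p W"
  proof (rule inj_onI)
    fix x y assume "x \<in> W" "y \<in> W" "p x = p y"
    then have "y = x \<or> y = - x" using identifies_antipodesD(3)[OF anti, of x y] WC by auto
    then show "x = y" using free \<open>x \<in> W\<close> \<open>y \<in> W\<close> by auto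
  qed
  fix U assume "openin (top_of_set W) U"
  then have "openin (top_of_set C) U" using W openin_trans by blast
  then have "openin (top_of_set (p ` C)) (p ` U)"
    by (rule open_map_identifies_antipodes[OF C p anti])
  moreover have "p ` U \<subseteq> p ` W" using openin_subset[OF \<open>openin (top_of_set W) U\<close>] by auto
  ultimately show "openin (top_of_set (p ` W)) (p ` U)"
    using WC by (meson image_mono openin_subset_trans)
qed (rule that)

lemma image_uminus_identifies_antipodes:
  assumes "identifies_antipodes C p" "V \<subseteq> C"
  shows "p ` uminus ` V = p ` V"
  using assms identifies_antipodesD(2) by (force simp: image_image intro!: image_cong)

lemma preimage_image_identifies_antipodes:
  assumes anti: "identifies_antipodes C p" and V: "V \<subseteq> C"
  shows "C \<inter> p -` (p ` V) = V \<union> uminus ` V"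
proof
  have "V \<union> uminus ` V \<subseteq> C" using V identifies_antipodesD(1)[OF anti] by auto
  moreover have "p ` (V \<union> uminus ` V) = p ` V"
    using image_uminus_identifies_antipodes[OF anti V] by (simp add: image_Un)
  ultimately show "V \<union> uminus ` V \<subseteq> C \<inter> p -` (p ` V)" by blast
  show "C \<inter> p -` (p ` V) \<subseteq> V \<union> uminus ` V"
  proof
    fix x assume "x \<in> C \<inter> p -` (p ` V)"
    then obtain v where "x \<in> C" "v \<in> V" "p x = p v" by auto
    then have "x = v \<or> x = - v" using identifies_antipodesD(3)[OF anti, of v x] V by auto
    then show "x \<in> V \<union> uminus ` V" using \<open>v \<in> V\<close> by auto
  qed
qed

lemma uminus_image_Int_ball:
  fixes c :: "'a::real_normed_vector"
  assumes "\<And>x. x \<in> C \<Longrightarrow> - x \<in> C"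
  shows "uminus ` (C \<inter> ball c r) = C \<inter> ball (- c) r"
proof -
  have "x \<in> uminus ` (C \<inter> ball c r) \<longleftrightarrow> x \<in> C \<inter> ball (- c) r" for x
  proof -
    have "x \<in> uminus ` (C \<inter> ball c r) \<longleftrightarrow> - x \<in> C \<inter> ball c r"
      by (metis image_eqI imageE minus_minus)
    also have "\<dots> \<longleftrightarrow> x \<in> C \<inter> ball (- c) r"
      using assms[of x] assms[of "- x"] dist_minus[of c "- x"] by auto
    finally show ?thesis .
  qed
  then show ?thesis by blast
qed

lemma covering_space_identifies_antipodes:
  fixes p :: "'a::real_normed_vector \<Rightarrow> 'b::t2_space"
  assumes C: "compact C" and p: "continuous_on C p" and anti: "identifies_antipodes C p"
    and nonzero: "0 \<notin> C"
  shows "covering_space C p (p ` C)"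
proof (rule covering_spaceI[OF p refl])
  fix y assume "y \<in> p ` C"
  then obtain c where c: "c \<in> C" "y = p c" by blast
  define V where "V = C \<inter> ball c (norm c / 2)"
  have "c \<noteq> 0" using c(1) nonzero by blast
  then have "c \<in> V" using c by (simp add: V_def)
  have VC: "V \<subseteq> C" by (simp add: V_def)
  have free: "- x \<notin> V" if "x \<in> V" for x
    using that antipode_notin_ball_half_norm by (auto simp: V_def)
  then have free': "- x \<notin> uminus ` V" if "x \<in> uminus ` V" for x
    using that by auto
  have oV: "openin (top_of_set C) V" by (simp add: V_def openin_open_Int)
  have "uminus ` V = C \<inter> ball (- c) (norm c / 2)"
    unfolding V_def by (rule uminus_image_Int_ball[OF identifies_antipodesD(1)[OF anti]])
  then have oV': "openin (top_of_set C) (uminus ` V)" by (simp add: openin_open_Int)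
  show "\<exists>T. y \<in> T \<and> openin (top_of_set (p ` C)) T \<and>
      (\<exists>v. \<Union>v = C \<inter> p -` T \<and> (\<forall>u\<in>v. openin (top_of_set C) u) \<and>
        pairwise disjnt v \<and> (\<forall>u\<in>v. \<exists>q. homeomorphism u T p q))"
  proof (intro exI[of _ "p ` V"] conjI exI[of _ "{V, uminus ` V}"] ballI)
    show "y \<in> p ` V" using \<open>c \<in> V\<close> c by simp
    show "openin (top_of_set (p ` C)) (p ` V)"
      by (rule open_map_identifies_antipodes[OF C p anti oV])
    show "\<Union>{V, uminus ` V} = C \<inter> p -` (p ` V)"
      using preimage_image_identifies_antipodes[OF anti VC] by simp
    show "openin (top_of_set C) u" if "u \<in> {V, uminus ` V}" for u using that oV oV' by blast
    show "pairwise disjnt {V, uminus ` V}"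
      using free by (auto simp: pairwise_insert disjnt_def)
    obtain q where "homeomorphism V (p ` V) p q"
      using homeomorphism_identifies_antipodes[OF C p anti oV free] .
    moreover obtain q' where "homeomorphism (uminus ` V) (p ` V) p q'"
      using homeomorphism_identifies_antipodes[OF C p anti oV' free']
      unfolding image_uminus_identifies_antipodes[OF anti VC] .
    ultimately show "\<exists>q. homeomorphism u (p ` V) p q" if "u \<in> {V, uminus ` V}" for u
      using that by blast
  qed
qed

lemma identifies_antipodes_pmap: "identifies_antipodes (Sp1 \<times> Sp1) pmap"
  by (simp add: identifies_antipodes_def uminus_mem_Sp1_Times pmap_uminus pmap_eq_cases)

lemma covering_space_pmap: "covering_space (Sp1 \<times> Sp1) pmap SO4"
proof -
  have "compact (Sp1 \<times> Sp1)" by (simp add: Sp1_eq_sphere compact_Times)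
  moreover have "0 \<notin> Sp1 \<times> Sp1" by (simp add: mem_Sp1_Times_iff)
  ultimately show ?thesis
    using covering_space_identifies_antipodes[OF _ continuous_on_pmap identifies_antipodes_pmap]
    by (simp add: pmap_image_Sp1)
qed

section \<open>Lifts\<close>

lemma is_lift_continuous_SO4:
  assumes "is_lift L W"
  shows "continuous_on UNIV W" "W \<in> UNIV \<rightarrow> SO4"
proof -
  have L: "continuous_on UNIV L" "\<And>k. L k \<in> Sp1 \<times> Sp1" and W: "W = (\<lambda>k. pmap (L k))"
    using assms by (auto simp: is_lift_def)
  show "continuous_on UNIV W" unfolding W by (rule continuous_on_pmap_compose[OF L])
  show "W \<in> UNIV \<rightarrow> SO4" unfolding W using L(2) pmap_in_SO4 by blast
qed

lemma is_lift_unique: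
  assumes L: "is_lift L W" and L': "is_lift L' W" and eq: "L a = L' a"
  shows "L = L'"
proof
  fix k
  show "L k = L' k"
    using is_lift_continuous_SO4[OF L] L L' eq
    by (intro covering_space_lift_unique[OF covering_space_pmap, of L a L' UNIV W k])
       (auto simp: is_lift_def)
qed

lemma is_lift_uminus: "is_lift L W \<Longrightarrow> is_lift (\<lambda>k. - L k) W"
  by (auto simp: is_lift_def uminus_mem_Sp1_Times pmap_uminus intro: continuous_intros)

lemma is_lift_cases:
  assumes L: "is_lift L W" and L': "is_lift L' W"
  shows "L = L' \<or> L = (\<lambda>k. - L' k)"
proof -
  have "L' 0 \<in> Sp1 \<times> Sp1" "L 0 \<in> Sp1 \<times> Sp1" "pmap (L 0) = pmap (L' 0)"
    using L L' by (simp_all add: is_lift_def)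
  then have "L 0 = L' 0 \<or> L 0 = - L' 0" by (rule pmap_eq_cases)
  then show ?thesis
    using is_lift_unique[OF L L'] is_lift_unique[OF L is_lift_uminus[OF L']] by blast
qed

lemma lift_on_convex:
  fixes H :: "'a::real_normed_vector \<Rightarrow> real^4^4"
  assumes "convex U" "continuous_on U H" "H \<in> U \<rightarrow> SO4"
  obtains G where "continuous_on U G" "G \<in> U \<rightarrow> Sp1 \<times> Sp1" "\<And>y. y \<in> U \<Longrightarrow> pmap (G y) = H y"
  using covering_space_lift[OF covering_space_pmap convex_imp_simply_connected[OF assms(1)]
      convex_imp_locally_path_connected[OF assms(1)] assms(2,3)] by blast

section \<open>Symmetric loops and the parity of their lifts\<close>

lemma wmat_conj_pmap:
  "norm g = 1 \<Longrightarrow> norm h = 1 \<Longrightarrow>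
     wmat ** pmap (g, h) ** matrix_inv wmat = pmap (g, qmult (qconj qj) (qmult h qj))"
  by (simp add: wmat_eq_pmap matrix_inv_pmap pmap_mult norm_qmult)

lemma symmetric_loop_pmap_left:
  assumes cont: "continuous_on UNIV g" and unit: "\<And>k. norm (g k) = 1"
    and per: "\<And>k. g (k + 2 * pi) = g k" and sym: "\<And>k. qconj (g (- k)) = g k"
  shows "symmetric_loop (\<lambda>k. pmap (g k, q1))"
  unfolding symmetric_loop_def
proof (intro conjI allI)
  show "continuous_on UNIV (\<lambda>k. pmap (g k, q1))"
    by (rule continuous_on_pmap_compose) (auto intro!: continuous_intros cont
        simp: mem_Sp1_Times_iff unit)
  fix k
  show "pmap (g k, q1) \<in> SO4" by (rule pmap_in_SO4) (simp add: mem_Sp1_Times_iff unit)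
  show "pmap (g (k + 2 * pi), q1) = pmap (g k, q1)" by (simp add: per)
  show "wmat ** pmap (g k, q1) ** matrix_inv wmat = matrix_inv (pmap (g (- k), q1))"
    by (simp add: wmat_conj_pmap matrix_inv_pmap unit sym)
qed

lemma symmetric_lift_fst:
  assumes W: "symmetric_loop W" and L: "is_lift L W"
  shows "fst (L k) = qconj (fst (L (- k))) \<or> fst (L k) = - qconj (fst (L (- k)))"
proof -
  obtain g h where Lk: "L k = (g, h)" by (cases "L k")
  obtain g' h' where Lk': "L (- k) = (g', h')" by (cases "L (- k)")
  have n: "norm g = 1" "norm h = 1" "norm g' = 1" "norm h' = 1"
    using L Lk Lk' by (auto simp: is_lift_def mem_Sp1_Times_iff dest: spec[of _ k] spec[of _ "- k"])
  have "W k = pmap (g, h)" "W (- k) = pmap (g', h')"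
    using L Lk Lk' by (simp_all add: is_lift_def flip: Lk Lk')
  moreover have "wmat ** W k ** matrix_inv wmat = matrix_inv (W (- k))"
    using W by (simp add: symmetric_loop_def)
  ultimately have "pmap (qconj g', qconj h') = pmap (g, qmult (qconj qj) (qmult h qj))"
    using n by (simp add: wmat_conj_pmap matrix_inv_pmap)
  then have "(qconj g', qconj h') = (g, qmult (qconj qj) (qmult h qj)) \<or>
      (qconj g', qconj h') = - (g, qmult (qconj qj) (qmult h qj))"
    by (rule pmap_eq_cases[rotated 2]) (simp_all add: mem_Sp1_Times_iff n norm_qmult)
  then show ?thesis using Lk Lk' by auto
qed

lemma real_part_of_self_conjugate:
  assumes "norm a = 1" "a = qconj a \<or> a = - qconj a"
  shows "a$1 \<in> {-1, 0, 1}"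
  using assms(2)
proof
  assume "a = qconj a"
  then have "a$2 = - a$2" "a$3 = - a$3" "a$4 = - a$4" by (metis qconj_nth)+
  then have "(a$1)^2 = 1" using assms(1) norm_quat_power2[of a] by simp
  then show ?thesis by (auto simp: power2_eq_1_iff)
next
  assume "a = - qconj a"
  then have "a$1 = - a$1" by (metis qconj_nth(1) vector_uminus_component)
  then show ?thesis by simp
qed

definition lift_parity :: "(real \<Rightarrow> quat \<times> quat) \<Rightarrow> real" where
  "lift_parity L = fst (L 0) $ 1 * fst (L pi) $ 1"

lemma lift_parity_values:
  assumes W: "symmetric_loop W" and L: "is_lift L W"
  shows "lift_parity L \<in> {-1, 0, 1}"
proof -
  have C: "L k \<in> Sp1 \<times> Sp1" and pL: "pmap (L k) = W k" for k
    using L by (simp_all add: is_lift_def)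
  have unit: "norm (fst (L k)) = 1" for k using C[of k] by (simp add: mem_Sp1_Times_iff)
  have "fst (L 0) = qconj (fst (L 0)) \<or> fst (L 0) = - qconj (fst (L 0))"
    using symmetric_lift_fst[OF W L, of 0] by simp
  then have re0: "fst (L 0) $ 1 \<in> {-1, 0, 1}" by (rule real_part_of_self_conjugate[OF unit])
  have "W (- pi + 2 * pi) = W (- pi)" using W by (simp only: symmetric_loop_def)
  then have "pmap (L (- pi)) = pmap (L pi)" by (simp add: pL)
  then have "L (- pi) = L pi \<or> L (- pi) = - L pi" using pmap_eq_cases[OF C C] by blast
  then have "fst (L (- pi)) = fst (L pi) \<or> fst (L (- pi)) = - fst (L pi)" by auto
  moreover have "a = qconj a \<or> a = - qconj a"
    if "a = qconj b \<or> a = - qconj b" "b = a \<or> b = - a" for a b :: quat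
    using that by (metis minus_minus qconj_minus)
  ultimately have "fst (L pi) = qconj (fst (L pi)) \<or> fst (L pi) = - qconj (fst (L pi))"
    using symmetric_lift_fst[OF W L, of pi] by blast
  then have "fst (L pi) $ 1 \<in> {-1, 0, 1}" by (rule real_part_of_self_conjugate[OF unit])
  with re0 show ?thesis unfolding lift_parity_def by auto
qed

lemma lift_parity_eq:
  assumes "is_lift L W" "is_lift L' W"
  shows "lift_parity L = lift_parity L'"
  using is_lift_cases[OF assms] by (auto simp: lift_parity_def)

lemma homotopy_lift:
  fixes H :: "real \<times> real \<Rightarrow> real^4^4"
  assumes H: "continuous_on (UNIV \<times> {0..1}) H" "H \<in> UNIV \<times> {0..1} \<rightarrow> SO4"
  obtains G where "continuous_on (UNIV \<times> {0..1}) G"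
    "\<And>t. t \<in> {0..1} \<Longrightarrow> is_lift (\<lambda>k. G (k, t)) (\<lambda>k. H (k, t))"
proof -
  have "convex ((UNIV :: real set) \<times> {0..1 :: real})" by (simp add: convex_Times)
  then obtain G where G: "continuous_on (UNIV \<times> {0..1}) G" "G \<in> UNIV \<times> {0..1} \<rightarrow> Sp1 \<times> Sp1"
    and pG: "\<And>y. y \<in> UNIV \<times> {0..1} \<Longrightarrow> pmap (G y) = H y"
    using H by (rule lift_on_convex) blast
  have "is_lift (\<lambda>k. G (k, t)) (\<lambda>k. H (k, t))" if t: "t \<in> {0..1}" for t
    unfolding is_lift_def
  proof (intro conjI allI)
    show "continuous_on UNIV (\<lambda>k. G (k, t))"
      by (rule continuous_on_compose2[OF G(1)]) (use t in \<open>auto intro!: continuous_intros\<close>)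
    fix k
    show "G (k, t) \<in> Sp1 \<times> Sp1" using G(2) t by (simp add: Pi_iff)
    show "pmap (G (k, t)) = H (k, t)" using pG t by simp
  qed
  with G(1) show ?thesis by (rule that)
qed

lemma symmetric_homotopy_lift_parity:
  assumes H: "symmetric_homotopy H"
    and L0: "is_lift L0 (\<lambda>k. H (k, 0))" and L1: "is_lift L1 (\<lambda>k. H (k, 1))"
  shows "lift_parity L0 = lift_parity L1"
proof -
  have loops: "symmetric_loop (\<lambda>k. H (k, t))" if "t \<in> {0..1}" for t
    using H that by (simp add: symmetric_homotopy_def)
  have "continuous_on (UNIV \<times> {0..1}) H" using H by (simp add: symmetric_homotopy_def)
  moreover have "H \<in> UNIV \<times> {0..1} \<rightarrow> SO4" using loops by (auto simp: symmetric_loop_def)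
  ultimately obtain G where G: "continuous_on (UNIV \<times> {0..1}) G"
    and slices: "\<And>t. t \<in> {0..1} \<Longrightarrow> is_lift (\<lambda>k. G (k, t)) (\<lambda>k. H (k, t))"
    by (rule homotopy_lift) blast
  define P where "P t = lift_parity (\<lambda>k. G (k, t))" for t
  have "P constant_on {0..1}"
  proof (rule continuous_finite_range_constant)
    have "continuous_on {0..1} (\<lambda>t. G (a, t))" for a
      by (rule continuous_on_compose2[OF G]) (auto intro!: continuous_intros)
    then show "continuous_on {0..1} P"
      unfolding P_def lift_parity_def by (intro continuous_intros)
    have "P ` {0..1} \<subseteq> {-1, 0, 1}"
      unfolding P_def by (intro image_subsetI lift_parity_values[OF loops slices])
    then show "finite (P ` {0..1})" by (rule finite_subset) simp
  qed simp
  then have "P 0 = P 1" by (auto simp: constant_on_def)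
  then show ?thesis
    using lift_parity_eq[OF L0 slices[of 0]] lift_parity_eq[OF L1 slices[of 1]] by (simp add: P_def)
qed

section \<open>The loops W_n\<close>

definition qcis :: "real \<Rightarrow> quat" where
  "qcis \<theta> = qmk (cos \<theta>) (sin \<theta>) 0 0"

lemma norm_qcis [simp]: "norm (qcis \<theta>) = 1"
  by (simp add: qcis_def)

lemma qmult_qcis: "qmult (qcis \<alpha>) (qcis \<beta>) = qcis (\<alpha> + \<beta>)"
  by (simp add: qcis_def quat_eq_iff cos_add sin_add)

lemma qconj_qcis: "qconj (qcis \<theta>) = qcis (- \<theta>)"
  by (simp add: qcis_def quat_eq_iff)

lemma inner_qcis_qj [simp]: "qcis \<theta> \<bullet> qj = 0"
  by (simp add: qcis_def inner_quat)

lemma qcis_int_periodic: "qcis (of_int n * (k + 2 * pi)) = qcis (of_int n * k)"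
proof -
  have "of_int n * (k + 2 * pi) = of_int n * k + 2 * pi * of_int n" by (simp add: algebra_simps)
  then show ?thesis by (simp add: qcis_def cos_add sin_add)
qed

lemma continuous_on_qcis [continuous_intros]:
  fixes f :: "'a::t2_space \<Rightarrow> real"
  assumes "continuous_on S f"
  shows "continuous_on S (\<lambda>x. qcis (f x))"
  unfolding qcis_def by (auto intro!: continuous_intros assms)

lemma Wn_lift_eq: "Wn_lift n k = (qcis (of_int n * k), q1)"
  by (simp add: Wn_lift_def qcis_def)

lemma Wn_eq_pmap: "Wn n = (\<lambda>k. pmap (qcis (of_int n * k), q1))"
  by (simp add: fun_eq_iff Wn_def qcis_def pmap_eq_matrix_qact Let_def vec_eq_iff forall_4
      matrix_def qact_def axis_def)

lemma is_lift_Wn: "is_lift (Wn_lift n) (Wn n)"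
  by (simp add: is_lift_def Wn_lift_eq Wn_eq_pmap mem_Sp1_Times_iff continuous_intros)

lemma symmetric_loop_Wn: "symmetric_loop (Wn n)"
  unfolding Wn_eq_pmap
  by (rule symmetric_loop_pmap_left) (simp_all add: continuous_intros qcis_int_periodic qconj_qcis)

lemma Wn_lift_unique: "is_lift L (Wn n) \<Longrightarrow> L 0 = (q1, q1) \<Longrightarrow> L = Wn_lift n"
  by (rule is_lift_unique[OF _ is_lift_Wn, of _ _ 0]) (simp_all add: Wn_lift_def)

lemma Wn_lift_pi: "Wn_lift n pi = (qmk ((-1) ^ nat \<bar>n\<bar>) 0 0 0, q1)"
proof -
  have "cos (of_int n * pi) = (-1) ^ nat \<bar>n\<bar>"
    using cos_npi_int[of n] by (simp add: mult.commute even_nat_iff)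
  moreover have "sin (of_int n * pi) = 0" using sin_npi_int[of n] by (simp add: mult.commute)
  ultimately show ?thesis by (simp add: Wn_lift_def)
qed

lemma lift_parity_Wn_lift: "lift_parity (Wn_lift n) = (if even n then 1 else -1)"
  using cos_npi_int[of n] by (simp add: lift_parity_def Wn_lift_def mult.commute)

definition unwind :: "quat \<Rightarrow> quat \<Rightarrow> real \<Rightarrow> quat" where
  "unwind a b t = qmult (cos (pi / 2 * t) *\<^sub>R a + sin (pi / 2 * t) *\<^sub>R qj)
     (cos (pi / 2 * t) *\<^sub>R b - sin (pi / 2 * t) *\<^sub>R qj)"

lemma unwind_0 [simp]: "unwind a b 0 = qmult a b"
  by (simp add: unwind_def)

lemma unwind_1 [simp]: "unwind a b 1 = q1"
  by (simp add: unwind_def quat_eq_iff)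

lemma norm_cos_sin_orthonormal:
  fixes a b :: "'a::real_inner"
  assumes "norm a = 1" "norm b = 1" "a \<bullet> b = 0"
  shows "norm (cos \<theta> *\<^sub>R a + sin \<theta> *\<^sub>R b) = 1"
proof -
  have "(cos \<theta> *\<^sub>R a + sin \<theta> *\<^sub>R b) \<bullet> (cos \<theta> *\<^sub>R a + sin \<theta> *\<^sub>R b)
      = (cos \<theta>)^2 * (a \<bullet> a) + (sin \<theta>)^2 * (b \<bullet> b) + 2 * cos \<theta> * sin \<theta> * (a \<bullet> b)"
    by (simp add: inner_add_left inner_add_right inner_commute[of b a] power2_eq_square algebra_simps)
  then show ?thesis using assms by (simp add: norm_eq_1)
qed

lemma norm_unwind:
  assumes "norm a = 1" "norm b = 1" "a \<bullet> qj = 0" "b \<bullet> qj = 0"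
  shows "norm (unwind a b t) = 1"
proof -
  have "norm (cos (pi / 2 * t) *\<^sub>R b + sin (pi / 2 * t) *\<^sub>R (- qj)) = 1"
    using assms by (intro norm_cos_sin_orthonormal) simp_all
  then show ?thesis
    using norm_cos_sin_orthonormal[of a qj "pi / 2 * t"] assms by (simp add: unwind_def norm_qmult)
qed

lemma qconj_unwind: "qconj (unwind a b t) = unwind (qconj b) (qconj a) t"
  by (simp add: unwind_def quat_eq_iff algebra_simps)

lemma continuous_on_unwind [continuous_intros]:
  fixes t :: "'a::t2_space \<Rightarrow> real"
  assumes "continuous_on S a" "continuous_on S b" "continuous_on S t"
  shows "continuous_on S (\<lambda>x. unwind (a x) (b x) (t x))"
  unfolding unwind_def by (auto intro!: continuous_intros assms)

lemma loop_homotopic_Wn: "loop_homotopic_SO4 (Wn n) (\<lambda>k. mat 1)"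
  unfolding loop_homotopic_SO4_def
proof (intro exI[of _ "\<lambda>(k, t). pmap (unwind (qcis (of_int n * k)) q1 t, q1)"] conjI ballI allI impI)
  have unit: "norm (unwind (qcis (of_int n * k)) q1 t) = 1" for k t
    by (rule norm_unwind) (simp_all add: inner_quat qcis_def)
  show "continuous_on (UNIV \<times> {0..1}) (\<lambda>(k, t). pmap (unwind (qcis (of_int n * k)) q1 t, q1))"
    unfolding case_prod_unfold by (rule continuous_on_pmap_compose)
       (auto simp: mem_Sp1_Times_iff unit intro!: continuous_intros)
  show "(\<lambda>(k, t). pmap (unwind (qcis (of_int n * k)) q1 t, q1)) x \<in> SO4" for x
    by (cases x) (simp add: pmap_in_SO4 mem_Sp1_Times_iff unit)
qed (simp_all add: qcis_int_periodic Wn_eq_pmap pmap_one)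

lemma symmetric_homotopy_Wn_even:
  assumes "even n"
  shows "\<exists>H. symmetric_homotopy H \<and> (\<forall>k. H (k, 0) = Wn n k) \<and> (\<forall>k. H (k, 1) = mat 1)"
proof -
  obtain m where n: "n = 2 * m" using assms by (auto elim: evenE)
  define H where "H = (\<lambda>(k, t). pmap (unwind (qcis (of_int m * k)) (qcis (of_int m * k)) t, q1))"
  have "symmetric_homotopy H"
    unfolding symmetric_homotopy_def
  proof (intro conjI ballI)
    show "continuous_on (UNIV \<times> {0..1}) H"
      unfolding H_def case_prod_unfold
      by (rule continuous_on_pmap_compose)
         (auto simp: mem_Sp1_Times_iff norm_unwind intro!: continuous_intros)
    fix t :: real
    show "symmetric_loop (\<lambda>k. H (k, t))"
      unfolding H_def case_prod_conv
      by (rule symmetric_loop_pmap_left)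
         (simp_all add: norm_unwind qcis_int_periodic qconj_unwind qconj_qcis continuous_intros)
  qed
  moreover have "H (k, 0) = Wn n k" for k
    by (simp add: H_def Wn_eq_pmap qmult_qcis n algebra_simps)
  moreover have "H (k, 1) = mat 1" for k
    by (simp add: H_def pmap_one)
  ultimately show ?thesis by blast
qed

lemma even_if_symmetric_homotopy_Wn:
  assumes "symmetric_homotopy H" "\<And>k. H (k, 0) = Wn n k" "\<And>k. H (k, 1) = mat 1"
  shows "even n"
proof -
  have "is_lift (Wn_lift n) (\<lambda>k. H (k, 0))" using is_lift_Wn by (simp add: assms(2))
  moreover have "is_lift (\<lambda>_. (q1, q1)) (\<lambda>k. H (k, 1))"
    by (simp add: is_lift_def assms(3) mem_Sp1_Times_iff pmap_one)
  ultimately have "lift_parity (Wn_lift n) = lift_parity (\<lambda>_. (q1, q1))"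
    by (rule symmetric_homotopy_lift_parity[OF assms(1)])
  moreover have "lift_parity (\<lambda>_. (q1, q1)) = 1" by (simp add: lift_parity_def)
  ultimately show ?thesis by (simp add: lift_parity_Wn_lift split: if_splits)
qed

theorem mainTheorem7:
  fixes n :: int
  shows "symmetric_loop (Wn n)
    \<and> loop_homotopic_SO4 (Wn n) (\<lambda>k. mat 1)
    \<and> is_lift (Wn_lift n) (Wn n) \<and> Wn_lift n 0 = (qmk 1 0 0 0, qmk 1 0 0 0)
    \<and> (\<forall>L. is_lift L (Wn n) \<and> L 0 = (qmk 1 0 0 0, qmk 1 0 0 0) \<longrightarrow> L = Wn_lift n)
    \<and> Wn_lift n pi = (qmk ((-1) ^ nat \<bar>n\<bar>) 0 0 0, qmk 1 0 0 0)
    \<and> ((\<exists>H. symmetric_homotopy H \<and> (\<forall>k. H (k, 0) = Wn n k) \<and> (\<forall>k. H (k, 1) = mat 1))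
        \<longleftrightarrow> even n)"
  using symmetric_loop_Wn loop_homotopic_Wn is_lift_Wn Wn_lift_unique Wn_lift_pi
    symmetric_homotopy_Wn_even even_if_symmetric_homotopy_Wn
  by (auto simp: Wn_lift_def)

end
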